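(* Suppose $w\in\mathbb{Z}^A$ induces the triangulation $Z$. Then there is a constant $a>0$, independent of $\delta$, such that for all sufficiently small $\delta>0$ and every $x\in P_\Sigma$, the set $S_x=\{m\in A:\rho_m(x)>\delta^a\}$ is the vertex set of a simplex (of some dimension $0,1$ or $2$) of $Z$.
   Context: Let $M\cong\mathbb{Z}^2$, $\Delta\subset M_{\mathbb{R}}$ a 2-dimensional lattice polygon, $A=\Delta\cap M$, $P_\Sigma$ the projective toric surface of the normal fan of $\Delta$ with torus $(\mathbb{C}^* )^2$, $s_m(x)=x^m$ for $m\in A$. For $w\in\mathbb{Z}^A$, $\delta\in(0,1)$: $\rho_m=\delta^{2w_m}|s_m|^2/\sum_{m'\in A}\delta^{2w_{m'}}|s_{m'}|^2$ (extended continuously to $P_\Sigma$). We say $w$ induces the triangulation $Z$ if $Z$ is a triangulation of $\Delta$ whose vertex set is all of $A$, each triangle of $Z$ containing no lattice points other than its vertices, such that for every simplex $\sigma$ of $Z$ there is an affine function $\ell_\sigma:M_{\mathbb{R}}\to\mathbb{R}$ with $w_m=\ell_\sigma(m)$ for vertices $m$ of $\sigma$ and $w_m>\ell_\sigma(m)$ for all other $m\in A$ (i.e. $Z$ is the strictly convex regular triangulation given by the lower convex hull of $\{(m,w_m)\}$). Simplices of $Z$ are identified with their vertex sets $S\subset A$; we write $S\in Z$. *)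

theory Defs
  imports "HOL-Analysis.Analysis"
begin

type_synonym lat = "int \<times> int"

definition of_lat :: "lat \<Rightarrow> real \<times> real" where
  "of_lat m = (real_of_int (fst m), real_of_int (snd m))"

definition lattice_polygon :: "(real \<times> real) set \<Rightarrow> bool" where
  "lattice_polygon \<Delta> \<longleftrightarrow> (\<exists>V. finite V \<and> \<Delta> = convex hull (of_lat ` V)) \<and> aff_dim \<Delta> = 2"

definition lattice_points :: "(real \<times> real) set \<Rightarrow> lat set" where
  "lattice_points \<Delta> = {m. of_lat m \<in> \<Delta>}"

definition aff_fun :: "real \<Rightarrow> real \<Rightarrow> real \<Rightarrow> lat \<Rightarrow> real" where
  "aff_fun c0 c1 c2 m = c0 + c1 * real_of_int (fst m) + c2 * real_of_int (snd m)"

definition is_triangulation :: "(real \<times> real) set \<Rightarrow> lat set \<Rightarrow> lat set set \<Rightarrow> bool" where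
  "is_triangulation \<Delta> A Z \<longleftrightarrow>
     finite Z \<and>
     (\<forall>S\<in>Z. S \<noteq> {} \<and> S \<subseteq> A \<and> card S \<le> 3 \<and> \<not> affine_dependent (of_lat ` S)) \<and>
     (\<forall>S\<in>Z. \<forall>T. T \<subseteq> S \<and> T \<noteq> {} \<longrightarrow> T \<in> Z) \<and>
     (\<forall>S\<in>Z. \<exists>T\<in>Z. card T = 3 \<and> S \<subseteq> T) \<and>
     (\<Union>S\<in>Z. convex hull (of_lat ` S)) = \<Delta> \<and>
     (\<forall>S\<in>Z. \<forall>T\<in>Z. convex hull (of_lat ` S) \<inter> convex hull (of_lat ` T)
                      = convex hull (of_lat ` (S \<inter> T))) \<and>
     (\<forall>m\<in>A. {m} \<in> Z) \<and>
     (\<forall>S\<in>Z. card S = 3 \<longrightarrow> {m. of_lat m \<in> convex hull (of_lat ` S)} = S)"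

definition induces :: "(real \<times> real) set \<Rightarrow> (lat \<Rightarrow> int) \<Rightarrow> lat set set \<Rightarrow> bool" where
  "induces \<Delta> w Z \<longleftrightarrow> is_triangulation \<Delta> (lattice_points \<Delta>) Z \<and>
     (\<forall>S\<in>Z. \<exists>c0 c1 c2. (\<forall>m\<in>S. real_of_int (w m) = aff_fun c0 c1 c2 m) \<and>
                        (\<forall>m\<in>lattice_points \<Delta> - S. real_of_int (w m) > aff_fun c0 c1 c2 m))"

definition mon :: "complex \<times> complex \<Rightarrow> lat \<Rightarrow> complex" where
  "mon x m = power_int (fst x) (fst m) * power_int (snd x) (snd m)"

definition torus :: "(complex \<times> complex) set" where
  "torus = {x. fst x \<noteq> 0 \<and> snd x \<noteq> 0}"

definition mon_norm :: "lat set \<Rightarrow> complex \<times> complex \<Rightarrow> real" where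
  "mon_norm A x = sqrt (\<Sum>m\<in>A. (cmod (mon x m))\<^sup>2)"

text \<open>P_Sigma, realised through its projective embedding by the sections s_m, m \<in> A
  (very ample for a 2-dimensional lattice polygon): a point is represented by a unit vector
  (up to phase) in C^A which is a limit of normalised monomial vectors of torus points.\<close>
definition PSigma :: "lat set \<Rightarrow> (lat \<Rightarrow> complex) set" where
  "PSigma A = {z. (\<forall>m. m \<notin> A \<longrightarrow> z m = 0) \<and>
     (\<exists>X. (\<forall>k. X k \<in> torus) \<and>
          (\<forall>m\<in>A. (\<lambda>k. mon (X k) m / complex_of_real (mon_norm A (X k))) \<longlonglongrightarrow> z m))}"

text \<open>rho_m, evaluated on the homogeneous coordinates z (this is the continuous extension).\<close>
definition rho :: "lat set \<Rightarrow> (lat \<Rightarrow> int) \<Rightarrow> real \<Rightarrow> (lat \<Rightarrow> complex) \<Rightarrow> lat \<Rightarrow> real" where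
  "rho A w \<delta> z m = \<delta> powr (2 * real_of_int (w m)) * (cmod (z m))\<^sup>2 /
     (\<Sum>m'\<in>A. \<delta> powr (2 * real_of_int (w m')) * (cmod (z m'))\<^sup>2)"

end

theory Submission
  imports Defs
begin

(* At a torus point x, rho_m is proportional to exp (- h m) with
   h m = 2 (t w_m - <y, m>), t = - ln delta, y = (ln |x_1|, ln |x_2|), so rho_m > delta^a forces
   h m <= h n + t a for every n in A.  Scaling w by 2 t and subtracting the linear function 2 <y, .>
   turns the uniform gap eta > 0 by which w induces Z into a gap 2 t eta for h.  If a set S of such near-minimizers were
   not contained in a simplex, take the simplex sigma containing the barycentre b of S and its
   supporting affine function l: then sum_S h >= |S| l(b) + 2 t eta, while near-minimality and
   convexity of half-planes give h m <= l(b) + t a for m in S, a contradiction once |A| a < 2 eta.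
   A point of P_Sigma is a limit of torus points, where the superlevel set can only be larger, and
   the superlevel set is nonempty because the rho_m sum to 1 and |A| delta^a < 1. *)

lemma finite_lattice_points:
  assumes "bounded \<Delta>" shows "finite (lattice_points \<Delta>)"
proof -
  obtain B where B: "\<And>p. p \<in> \<Delta> \<Longrightarrow> norm p \<le> B"
    using assms bounded_iff by blast
  have "lattice_points \<Delta> \<subseteq> {-\<lceil>B\<rceil>..\<lceil>B\<rceil>} \<times> {-\<lceil>B\<rceil>..\<lceil>B\<rceil>}"
  proof
    fix m assume "m \<in> lattice_points \<Delta>"
    then have "norm (of_lat m) \<le> B" by (simp add: B lattice_points_def)
    moreover have "\<bar>real_of_int (fst m)\<bar> \<le> norm (of_lat m)" "\<bar>real_of_int (snd m)\<bar> \<le> norm (of_lat m)"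
      unfolding of_lat_def by (metis fst_conv snd_conv norm_fst_le norm_snd_le real_norm_def)+
    ultimately show "m \<in> {-\<lceil>B\<rceil>..\<lceil>B\<rceil>} \<times> {-\<lceil>B\<rceil>..\<lceil>B\<rceil>}"
      by (cases m) (auto simp: abs_le_iff, linarith+)
  qed
  then show ?thesis by (rule finite_subset) simp
qed

lemma lattice_polygonD:
  assumes "lattice_polygon \<Delta>"
  shows "convex \<Delta>" "finite (lattice_points \<Delta>)" "lattice_points \<Delta> \<noteq> {}"
proof -
  obtain V where V: "finite V" "\<Delta> = convex hull (of_lat ` V)" and dim: "aff_dim \<Delta> = 2"
    using assms unfolding lattice_polygon_def by blast
  show "convex \<Delta>" by (simp add: V(2))
  show "finite (lattice_points \<Delta>)"
    by (intro finite_lattice_points compact_imp_bounded) (simp add: V compact_convex_hull finite_imp_compact)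
  have "V \<noteq> {}" using dim V(2) by auto
  then obtain v where "v \<in> V" by blast
  then have "of_lat v \<in> \<Delta>" unfolding V(2) by (intro hull_inc imageI)
  then show "lattice_points \<Delta> \<noteq> {}" unfolding lattice_points_def by blast
qed

definition supporting_gap :: "lat set \<Rightarrow> lat set set \<Rightarrow> (lat \<Rightarrow> real) \<Rightarrow> real \<Rightarrow> bool" where
  "supporting_gap A Z f \<eta> \<longleftrightarrow> (\<forall>S\<in>Z. \<exists>c0 c1 c2. (\<forall>m\<in>S. f m = aff_fun c0 c1 c2 m) \<and>
                                           (\<forall>m\<in>A - S. aff_fun c0 c1 c2 m + \<eta> \<le> f m))"

lemma supporting_gap_exists:
  assumes "finite Z" "finite A"
    and "\<forall>S\<in>Z. \<exists>c0 c1 c2. (\<forall>m\<in>S. f m = aff_fun c0 c1 c2 m) \<and> (\<forall>m\<in>A - S. f m > aff_fun c0 c1 c2 m)"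
  shows "\<exists>\<eta>>0. supporting_gap A Z f \<eta>"
proof -
  have "\<forall>\<^sub>F \<eta> in at_right 0. \<exists>c0 c1 c2. (\<forall>m\<in>S. f m = aff_fun c0 c1 c2 m) \<and>
                                   (\<forall>m\<in>A - S. aff_fun c0 c1 c2 m + \<eta> \<le> f m)" if "S \<in> Z" for S
  proof -
    obtain c0 c1 c2 where eq: "\<forall>m\<in>S. f m = aff_fun c0 c1 c2 m"
      and gt: "\<forall>m\<in>A - S. f m > aff_fun c0 c1 c2 m"
      using assms(3) \<open>S \<in> Z\<close> by blast
    have "\<forall>m\<in>A - S. \<forall>\<^sub>F \<eta> in at_right 0. aff_fun c0 c1 c2 m + \<eta> \<le> f m"
      using gt by (auto simp: eventually_at_right_field intro!: exI[where x = "f _ - aff_fun c0 c1 c2 _"])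
    then have "\<forall>\<^sub>F \<eta> in at_right 0. \<forall>m\<in>A - S. aff_fun c0 c1 c2 m + \<eta> \<le> f m"
      using assms(2) by (intro eventually_ball_finite) auto
    then show ?thesis by eventually_elim (use eq in blast)
  qed
  then have "\<forall>\<^sub>F \<eta> in at_right 0. 0 < \<eta> \<and> supporting_gap A Z f \<eta>"
    unfolding supporting_gap_def using assms(1)
    by (intro eventually_conj eventually_at_right_less eventually_ball_finite) auto
  then show ?thesis using eventually_happens'[OF trivial_limit_at_right_real] by blast
qed

lemma supporting_gap_affine_transform:
  assumes "supporting_gap A Z f \<eta>" "0 < t"
  shows "supporting_gap A Z (\<lambda>m. t * f m + aff_fun d0 d1 d2 m) (t * \<eta>)"
  unfolding supporting_gap_def
proof
  fix S assume "S \<in> Z"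
  then obtain c0 c1 c2 where eq: "\<forall>m\<in>S. f m = aff_fun c0 c1 c2 m"
    and ge: "\<forall>m\<in>A - S. aff_fun c0 c1 c2 m + \<eta> \<le> f m"
    using assms(1) unfolding supporting_gap_def by blast
  have shift: "t * aff_fun c0 c1 c2 m + aff_fun d0 d1 d2 m = aff_fun (t * c0 + d0) (t * c1 + d1) (t * c2 + d2) m" for m
    by (simp add: aff_fun_def algebra_simps)
  show "\<exists>c0 c1 c2. (\<forall>m\<in>S. t * f m + aff_fun d0 d1 d2 m = aff_fun c0 c1 c2 m) \<and>
          (\<forall>m\<in>A - S. aff_fun c0 c1 c2 m + t * \<eta> \<le> t * f m + aff_fun d0 d1 d2 m)"
  proof (intro exI conjI ballI)
    show "t * f m + aff_fun d0 d1 d2 m = aff_fun (t * c0 + d0) (t * c1 + d1) (t * c2 + d2) m"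
      if "m \<in> S" for m using eq that shift by simp
    show "aff_fun (t * c0 + d0) (t * c1 + d1) (t * c2 + d2) m + t * \<eta> \<le> t * f m + aff_fun d0 d1 d2 m"
      if "m \<in> A - S" for m
      using mult_left_mono[OF ge[rule_format, OF that], of t] assms(2) shift[of m]
      by (simp add: algebra_simps)
  qed
qed

lemma near_minimizers_in_simplex:
  fixes f :: "lat \<Rightarrow> real" and \<epsilon> \<eta> :: real
  assumes tri: "is_triangulation \<Delta> A Z" and "convex \<Delta>" "of_lat ` A \<subseteq> \<Delta>"
    and gap: "supporting_gap A Z f \<eta>"
    and S: "S \<subseteq> A" "finite S" "S \<noteq> {}"
    and near: "\<And>m n. m \<in> S \<Longrightarrow> n \<in> A \<Longrightarrow> f m \<le> f n + \<epsilon>"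
    and small: "real (card S) * \<epsilon> < \<eta>"
  shows "\<exists>\<sigma>\<in>Z. S \<subseteq> \<sigma>"
proof (rule ccontr)
  assume not_in_simplex: "\<not> (\<exists>\<sigma>\<in>Z. S \<subseteq> \<sigma>)"
  define k where "k = real (card S)"
  have "k > 0" using S by (simp add: k_def card_gt_0_iff)
  define b where "b = (\<Sum>m\<in>S. (1 / k) *\<^sub>R of_lat m)"
  have "b \<in> \<Delta>"
    unfolding b_def using S \<open>k > 0\<close> assms(2,3) by (intro convex_sum) (auto simp: k_def)
  moreover have "\<Delta> = (\<Union>\<sigma>\<in>Z. convex hull (of_lat ` \<sigma>))" and ZA: "\<forall>\<sigma>\<in>Z. \<sigma> \<subseteq> A"
    using tri unfolding is_triangulation_def by auto
  ultimately obtain \<sigma> where "\<sigma> \<in> Z" and b_hull: "b \<in> convex hull (of_lat ` \<sigma>)" by blast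
  then obtain c0 c1 c2 where eq: "\<forall>m\<in>\<sigma>. f m = aff_fun c0 c1 c2 m"
    and ge: "\<forall>m\<in>A - \<sigma>. aff_fun c0 c1 c2 m + \<eta> \<le> f m"
    using gap unfolding supporting_gap_def by blast
  define L where "L p = c0 + (c1, c2) \<bullet> p" for p :: "real \<times> real"
  have L_lat: "aff_fun c0 c1 c2 m = L (of_lat m)" for m
    by (simp add: aff_fun_def L_def of_lat_def inner_prod_def)
  have "0 \<le> \<epsilon>" using near S by fastforce
  then have "0 < \<eta>" using small by (smt (verit) of_nat_0_le_iff mult_nonneg_nonneg)
  have upper: "f m \<le> L b + \<epsilon>" if "m \<in> S" for m
  proof -
    have "of_lat ` \<sigma> \<subseteq> {p. f m - \<epsilon> - c0 \<le> (c1, c2) \<bullet> p}"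
      using near[OF that] eq ZA \<open>\<sigma> \<in> Z\<close> by (force simp: L_lat L_def)
    then have "convex hull (of_lat ` \<sigma>) \<subseteq> {p. f m - \<epsilon> - c0 \<le> (c1, c2) \<bullet> p}"
      by (rule hull_minimal) (simp add: convex_halfspace_ge)
    then show ?thesis using b_hull by (auto simp: L_def)
  qed
  have lower: "L (of_lat m) \<le> f m" if "m \<in> A" for m
    using that eq ge \<open>0 < \<eta>\<close> by (cases "m \<in> \<sigma>") (force simp: L_lat)+
  obtain m1 where m1: "m1 \<in> S" "m1 \<notin> \<sigma>" using not_in_simplex \<open>\<sigma> \<in> Z\<close> by blast
  have "k * L b = (\<Sum>m\<in>S. L (of_lat m))"
    using \<open>k > 0\<close> by (simp add: L_def b_def k_def inner_sum_right sum_divide_distrib[symmetric] distrib_left sum.distrib)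
  also have "\<dots> + \<eta> \<le> (\<Sum>m\<in>S. f m)"
  proof -
    have "\<eta> \<le> f m1 - L (of_lat m1)" using ge m1 S(1) by (force simp: L_lat)
    also have "\<dots> \<le> (\<Sum>m\<in>S. f m - L (of_lat m))"
      using m1(1) S lower by (intro member_le_sum) auto
    finally show ?thesis by (simp add: sum_subtractf)
  qed
  also have "\<dots> \<le> (\<Sum>m\<in>S. L b + \<epsilon>)" using upper by (rule sum_mono)
  also have "\<dots> = k * L b + k * \<epsilon>" by (simp add: k_def algebra_simps)
  finally show False using small by (simp add: k_def)
qed

lemma exp_share_gt_imp_near_min:
  fixes h :: "'a \<Rightarrow> real"
  assumes "finite A" "n \<in> A" and share: "exp (- c) < exp (- h m) / (\<Sum>k\<in>A. exp (- h k))"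
  shows "h m < h n + c"
proof -
  have "exp (- h n) \<le> (\<Sum>k\<in>A. exp (- h k))"
    using assms(1,2) by (intro member_le_sum) auto
  moreover have "0 < (\<Sum>k\<in>A. exp (- h k))"
    using assms(1,2) by (intro sum_pos) auto
  ultimately have "exp (- c) * exp (- h n) < exp (- h m)"
    using share by (smt (verit, best) exp_gt_zero mult_left_mono pos_less_divide_eq)
  then show ?thesis by (simp flip: exp_add)
qed

lemma weighted_mon_torus:
  assumes "x \<in> torus" "0 < \<delta>"
  shows "\<delta> powr (2 * real_of_int (w m)) * (cmod (mon x m))\<^sup>2
       = exp (- (2 * (- ln \<delta>) * real_of_int (w m)
                 + aff_fun 0 (- 2 * ln (cmod (fst x))) (- 2 * ln (cmod (snd x))) m))"
proof -
  have "cmod (fst x) > 0" "cmod (snd x) > 0" using assms(1) by (auto simp: torus_def)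
  then have "cmod (mon x m) = exp (real_of_int (fst m) * ln (cmod (fst x)) + real_of_int (snd m) * ln (cmod (snd x)))"
    by (simp add: mon_def norm_mult norm_power_int exp_add flip: exp_power_int)
  then have "(cmod (mon x m))\<^sup>2 = exp (2 * (real_of_int (fst m) * ln (cmod (fst x)) + real_of_int (snd m) * ln (cmod (snd x))))"
    by (simp add: power2_eq_square flip: exp_add)
  moreover have "\<delta> powr (2 * real_of_int (w m)) = exp (2 * real_of_int (w m) * ln \<delta>)"
    using assms(2) by (simp add: powr_def mult.commute)
  ultimately show ?thesis
    by (simp add: aff_fun_def algebra_simps flip: exp_add)
qed

lemma rho_divide_const:
  assumes "c \<noteq> 0"
  shows "rho A w \<delta> (\<lambda>m. z m / c) = rho A w \<delta> z"
proof
  fix m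
  have "rho A w \<delta> (\<lambda>m. z m / c) m
      = (\<delta> powr (2 * real_of_int (w m)) * (cmod (z m))\<^sup>2 / (cmod c)\<^sup>2) /
        ((\<Sum>m'\<in>A. \<delta> powr (2 * real_of_int (w m')) * (cmod (z m'))\<^sup>2) / (cmod c)\<^sup>2)"
    by (simp add: rho_def norm_divide power_divide sum_divide_distrib)
  then show "rho A w \<delta> (\<lambda>m. z m / c) m = rho A w \<delta> z m"
    using assms by (simp add: rho_def)
qed

lemma rho_denominator_pos:
  assumes "0 < \<delta>" "finite A" "m0 \<in> A" "z m0 \<noteq> 0"
  shows "0 < (\<Sum>m\<in>A. \<delta> powr (2 * real_of_int (w m)) * (cmod (z m))\<^sup>2)"
  using assms by (intro sum_pos2[of A m0]) auto

lemma sum_rho: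
  assumes "0 < \<delta>" "finite A" "m0 \<in> A" "z m0 \<noteq> 0"
  shows "(\<Sum>m\<in>A. rho A w \<delta> z m) = 1"
  using rho_denominator_pos[of \<delta> A m0 z w] assms by (simp add: rho_def flip: sum_divide_distrib)

lemma mon_norm_pos:
  assumes "x \<in> torus" "finite A" "A \<noteq> {}"
  shows "0 < mon_norm A x"
proof -
  obtain m0 where "m0 \<in> A" using assms(3) by blast
  moreover have "mon x m0 \<noteq> 0" using assms(1) by (simp add: mon_def torus_def)
  ultimately show ?thesis
    unfolding mon_norm_def using assms(2) by (intro real_sqrt_gt_zero sum_pos2[of A m0]) auto
qed

lemma PSigma_unit:
  assumes "z \<in> PSigma A" "finite A" "A \<noteq> {}"
  shows "(\<Sum>m\<in>A. (cmod (z m))\<^sup>2) = 1"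
proof -
  obtain X where X: "\<And>k. X k \<in> torus"
    and lim: "\<And>m. m \<in> A \<Longrightarrow> (\<lambda>k. mon (X k) m / complex_of_real (mon_norm A (X k))) \<longlonglongrightarrow> z m"
    using assms(1) unfolding PSigma_def by blast
  have "(\<lambda>k. \<Sum>m\<in>A. (cmod (mon (X k) m / complex_of_real (mon_norm A (X k))))\<^sup>2)
          \<longlonglongrightarrow> (\<Sum>m\<in>A. (cmod (z m))\<^sup>2)"
    by (intro tendsto_intros lim)
  moreover have "(\<Sum>m\<in>A. (cmod (mon (X k) m / complex_of_real (mon_norm A (X k))))\<^sup>2) = 1" for k
    using mon_norm_pos[OF X assms(2,3), of k]
    by (simp add: norm_divide power_divide real_sqrt_pow2 mon_norm_def sum_nonneg flip: sum_divide_distrib)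
  ultimately show ?thesis by (simp add: LIMSEQ_const_iff)
qed

lemma PSigma_nonzero:
  assumes "z \<in> PSigma A" "finite A" "A \<noteq> {}"
  obtains m0 where "m0 \<in> A" "z m0 \<noteq> 0"
proof -
  have "(\<Sum>m\<in>A. (cmod (z m))\<^sup>2) \<noteq> 0" using PSigma_unit[OF assms] by simp
  then obtain m0 where "m0 \<in> A" "(cmod (z m0))\<^sup>2 \<noteq> 0" using sum.neutral[of A "\<lambda>m. (cmod (z m))\<^sup>2"] by blast
  then show ?thesis using that by simp
qed

lemma PSigma_superlevel_nonempty:
  assumes "z \<in> PSigma A" "finite A" "A \<noteq> {}" "0 < \<delta>" "real (card A) * c < 1"
  shows "{m \<in> A. c < rho A w \<delta> z m} \<noteq> {}"
proof
  assume empty: "{m \<in> A. c < rho A w \<delta> z m} = {}"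
  obtain m0 where "m0 \<in> A" "z m0 \<noteq> 0" using PSigma_nonzero[OF assms(1-3)] .
  then have "1 = (\<Sum>m\<in>A. rho A w \<delta> z m)" using assms(2,4) by (simp add: sum_rho)
  also have "\<dots> \<le> (\<Sum>m\<in>A. c)" using empty by (intro sum_mono) (auto simp: not_less)
  finally show False using assms(5) by simp
qed

lemma PSigma_superlevel_approx:
  assumes "z \<in> PSigma A" "finite A" "A \<noteq> {}" "0 < \<delta>"
  shows "\<exists>x\<in>torus. \<forall>m\<in>{m \<in> A. c < rho A w \<delta> z m}. c < rho A w \<delta> (mon x) m"
proof -
  obtain X where X: "\<And>k. X k \<in> torus"
    and lim: "\<And>m. m \<in> A \<Longrightarrow> (\<lambda>k. mon (X k) m / complex_of_real (mon_norm A (X k))) \<longlonglongrightarrow> z m"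
    using assms(1) unfolding PSigma_def by blast
  obtain m0 where "m0 \<in> A" "z m0 \<noteq> 0" using PSigma_nonzero[OF assms(1-3)] .
  then have denom: "0 < (\<Sum>m\<in>A. \<delta> powr (2 * real_of_int (w m)) * (cmod (z m))\<^sup>2)"
    using assms(2,4) by (rule_tac rho_denominator_pos) auto
  have conv: "(\<lambda>k. rho A w \<delta> (mon (X k)) m) \<longlonglongrightarrow> rho A w \<delta> z m" if "m \<in> A" for m
  proof -
    have "rho A w \<delta> (mon (X k)) = rho A w \<delta> (\<lambda>m. mon (X k) m / complex_of_real (mon_norm A (X k)))" for k
      using mon_norm_pos[OF X assms(2,3), of k] by (simp add: rho_divide_const)
    moreover have "(\<lambda>k. rho A w \<delta> (\<lambda>m. mon (X k) m / complex_of_real (mon_norm A (X k))) m)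
                     \<longlonglongrightarrow> rho A w \<delta> z m"
      unfolding rho_def using denom that by (intro tendsto_intros lim) auto
    ultimately show ?thesis by simp
  qed
  have "\<forall>\<^sub>F k in sequentially. c < rho A w \<delta> (mon (X k)) m" if "m \<in> A" "c < rho A w \<delta> z m" for m
    using order_tendstoD(1)[OF conv[OF that(1)] that(2)] .
  then have "\<forall>\<^sub>F k in sequentially. \<forall>m\<in>{m \<in> A. c < rho A w \<delta> z m}. c < rho A w \<delta> (mon (X k)) m"
    using assms(2) by (intro eventually_ball_finite) auto
  then obtain k where "\<forall>m\<in>{m \<in> A. c < rho A w \<delta> z m}. c < rho A w \<delta> (mon (X k)) m"
    by (auto simp: eventually_sequentially)
  then show ?thesis using X by blast
qed

lemma torus_superlevel_in_simplex:
  fixes w :: "lat \<Rightarrow> int"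
  assumes tri: "is_triangulation \<Delta> A Z" "convex \<Delta>" "of_lat ` A \<subseteq> \<Delta>" "finite A"
    and gap: "supporting_gap A Z (\<lambda>m. real_of_int (w m)) \<eta>"
    and x: "x \<in> torus" and \<delta>: "0 < \<delta>" "\<delta> < 1"
    and a: "0 < a" "real (card A) * a < 2 * \<eta>"
    and S: "S \<subseteq> A" "S \<noteq> {}" "\<forall>m\<in>S. \<delta> powr a < rho A w \<delta> (mon x) m"
  shows "\<exists>\<sigma>\<in>Z. S \<subseteq> \<sigma>"
proof -
  define t where "t = - ln \<delta>"
  have "0 < t" using \<delta> by (simp add: t_def)
  define h where "h m = 2 * t * real_of_int (w m)
                        + aff_fun 0 (- 2 * ln (cmod (fst x))) (- 2 * ln (cmod (snd x))) m" for m
  have rho_exp: "rho A w \<delta> (mon x) m = exp (- h m) / (\<Sum>k\<in>A. exp (- h k))" for m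
    using x \<delta>(1) by (simp add: rho_def h_def t_def weighted_mon_torus)
  have powr_exp: "\<delta> powr a = exp (- (t * a))" using \<delta>(1) by (simp add: powr_def t_def)
  have near: "h m \<le> h n + t * a" if "m \<in> S" "n \<in> A" for m n
  proof -
    have "exp (- (t * a)) < exp (- h m) / (\<Sum>k\<in>A. exp (- h k))"
      using S(3) that(1) by (simp only: powr_exp rho_exp)
    then have "h m < h n + t * a" by (rule exp_share_gt_imp_near_min[OF tri(4) that(2)])
    then show ?thesis by simp
  qed
  have "real (card S) * (t * a) \<le> real (card A) * (t * a)"
    using S(1) tri(4) \<open>0 < t\<close> a(1) by (intro mult_right_mono) (simp_all add: card_mono)
  also have "\<dots> < 2 * t * \<eta>" using a(2) \<open>0 < t\<close> by (simp add: algebra_simps)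
  finally have small: "real (card S) * (t * a) < 2 * t * \<eta>" .
  have "supporting_gap A Z h (2 * t * \<eta>)"
    unfolding h_def using gap \<open>0 < t\<close> by (intro supporting_gap_affine_transform) auto
  then show ?thesis
    using S(1) finite_subset[OF S(1) tri(4)] S(2) near small by (rule near_minimizers_in_simplex[OF tri(1-3)])
qed

lemma PSigma_superlevel_in_triangulation:
  fixes w :: "lat \<Rightarrow> int"
  assumes tri: "is_triangulation \<Delta> A Z" "convex \<Delta>" "of_lat ` A \<subseteq> \<Delta>" "finite A" "A \<noteq> {}"
    and gap: "supporting_gap A Z (\<lambda>m. real_of_int (w m)) \<eta>"
    and z: "z \<in> PSigma A" and \<delta>: "0 < \<delta>" "\<delta> < 1"
    and a: "0 < a" "real (card A) * a < 2 * \<eta>" "real (card A) * \<delta> powr a < 1"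
  shows "{m \<in> A. \<delta> powr a < rho A w \<delta> z m} \<in> Z"
proof -
  have nonempty: "{m \<in> A. \<delta> powr a < rho A w \<delta> z m} \<noteq> {}"
    using a(3) by (rule PSigma_superlevel_nonempty[OF z tri(4,5) \<delta>(1)])
  obtain x where "x \<in> torus"
    and "\<forall>m\<in>{m \<in> A. \<delta> powr a < rho A w \<delta> z m}. \<delta> powr a < rho A w \<delta> (mon x) m"
    using PSigma_superlevel_approx[OF z tri(4,5) \<delta>(1)] by blast
  then obtain \<sigma> where "\<sigma> \<in> Z" "{m \<in> A. \<delta> powr a < rho A w \<delta> z m} \<subseteq> \<sigma>"
    using torus_superlevel_in_simplex[OF tri(1-4) gap _ \<delta> a(1,2) _ nonempty] by blast
  moreover have "\<forall>S\<in>Z. \<forall>T. T \<subseteq> S \<and> T \<noteq> {} \<longrightarrow> T \<in> Z"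
    using tri(1) unfolding is_triangulation_def by (elim conjE)
  ultimately show ?thesis using nonempty by blast
qed

theorem lemma3p4:
  fixes \<Delta> :: "(real \<times> real) set" and w :: "lat \<Rightarrow> int" and Z :: "lat set set"
  assumes "lattice_polygon \<Delta>"
    and "induces \<Delta> w Z"
  shows "\<exists>a > 0. \<exists>\<delta>0 > 0. \<forall>\<delta>. 0 < \<delta> \<and> \<delta> < \<delta>0 \<and> \<delta> < 1 \<longrightarrow>
           (\<forall>z \<in> PSigma (lattice_points \<Delta>).
              {m \<in> lattice_points \<Delta>. rho (lattice_points \<Delta>) w \<delta> z m > \<delta> powr a} \<in> Z)"
proof -
  define A where "A = lattice_points \<Delta>"
  have \<Delta>: "convex \<Delta>" "of_lat ` A \<subseteq> \<Delta>" "finite A" "A \<noteq> {}"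
    using lattice_polygonD[OF assms(1)] by (auto simp: A_def lattice_points_def)
  then have "0 < card A" by (simp add: card_gt_0_iff)
  have tri: "is_triangulation \<Delta> A Z"
    using assms(2) unfolding induces_def A_def by (rule conjunct1)
  have strict: "\<forall>S\<in>Z. \<exists>c0 c1 c2. (\<forall>m\<in>S. real_of_int (w m) = aff_fun c0 c1 c2 m) \<and>
                            (\<forall>m\<in>A - S. real_of_int (w m) > aff_fun c0 c1 c2 m)"
    using assms(2) unfolding induces_def A_def by (rule conjunct2)
  have "finite Z" using tri unfolding is_triangulation_def by (elim conjE)
  obtain \<eta> where "0 < \<eta>" and gap: "supporting_gap A Z (\<lambda>m. real_of_int (w m)) \<eta>"
    using supporting_gap_exists[OF \<open>finite Z\<close> \<Delta>(3) strict] by blast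
  define a where "a = \<eta> / card A"
  define \<delta>0 where "\<delta>0 = (1 / card A) powr (1 / a)"
  have a: "0 < a" "real (card A) * a < 2 * \<eta>"
    using \<open>0 < \<eta>\<close> \<open>0 < card A\<close> by (auto simp: a_def)
  have "real (card A) * \<delta> powr a < 1" if "0 < \<delta>" "\<delta> < \<delta>0" for \<delta>
  proof -
    have "real (card A) * \<delta> powr a < real (card A) * \<delta>0 powr a"
      using that a(1) \<open>0 < card A\<close> by (intro mult_strict_left_mono powr_less_mono2) auto
    also have "\<dots> = 1" using a(1) \<open>0 < card A\<close> by (simp add: \<delta>0_def powr_powr)
    finally show ?thesis .
  qed
  moreover have "0 < \<delta>0" using \<open>0 < card A\<close> by (simp add: \<delta>0_def)
  ultimately show ?thesis
    using PSigma_superlevel_in_triangulation[OF tri \<Delta> gap _ _ _ a] a(1) unfolding A_def by blast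
qed

end
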